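(* For every simple game $v$ on $n\ge 2$ players and every player $i$ that is not a dictator in $v$, we have $\mathrm{SSI}_i(v)\le \frac{n-1}{n}$.
   Context: A simple game on $N=\{1,\dots,n\}$ is a surjective, monotone map $v\colon 2^N\to\{0,1\}$ (monotone: $v(S)\le v(T)$ whenever $S\subseteq T\subseteq N$). Player $j$ is a null player if $v(S)=v(S\cup\{j\})$ for all $S\subseteq N\setminus\{j\}$; player $i$ is a dictator if $v(\{i\})=1$ and all other players are null players. The Shapley–Shubik index is $\mathrm{SSI}_i(v)=\sum_{S\subseteq N\setminus\{i\}}\frac{|S|!\,(n-|S|-1)!}{n!}\,\big(v(S\cup\{i\})-v(S)\big)$. *)

theory Defs
  imports Complex_Main
begin

text \<open>Players are N = {1..n}; a game is a function on subsets of N (values outside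
Pow N are irrelevant).\<close>

definition simple_game :: "nat \<Rightarrow> (nat set \<Rightarrow> nat) \<Rightarrow> bool" where
  "simple_game n v \<longleftrightarrow>
     v ` Pow {1..n} = {0, 1} \<and>
     (\<forall>S T. S \<subseteq> T \<and> T \<subseteq> {1..n} \<longrightarrow> v S \<le> v T)"

definition null_player :: "nat \<Rightarrow> (nat set \<Rightarrow> nat) \<Rightarrow> nat \<Rightarrow> bool" where
  "null_player n v j \<longleftrightarrow> (\<forall>S. S \<subseteq> {1..n} - {j} \<longrightarrow> v S = v (S \<union> {j}))"

definition dictator :: "nat \<Rightarrow> (nat set \<Rightarrow> nat) \<Rightarrow> nat \<Rightarrow> bool" where
  "dictator n v i \<longleftrightarrow> v {i} = 1 \<and> (\<forall>j \<in> {1..n} - {i}. null_player n v j)"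

definition SSI :: "nat \<Rightarrow> (nat set \<Rightarrow> nat) \<Rightarrow> nat \<Rightarrow> real" where
  "SSI n v i = (\<Sum>S \<in> Pow ({1..n} - {i}).
      fact (card S) * fact (n - card S - 1) / fact n
      * (real (v (S \<union> {i})) - real (v S)))"

end

theory Submission
  imports Defs
begin

text \<open>Every marginal contribution of i is at most 1 and the Shapley--Shubik weights over
the coalitions not containing i sum to 1, so SSI_i(v) is at most 1 minus the weight of any
coalition to which i contributes nothing. Unless i is a dictator, i contributes nothing
either to the empty coalition or to the coalition of all other players, and both of these
carry weight 1/n.\<close>

definition shapley_weight :: "nat \<Rightarrow> nat \<Rightarrow> real" where
  "shapley_weight n k = fact k * fact (n - k - 1) / fact n"

lemma SSI_eq_shapley_weight_sum:
  "SSI n v i = (\<Sum>S \<in> Pow ({1..n} - {i}).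
      shapley_weight n (card S) * (real (v (S \<union> {i})) - real (v S)))"
  by (simp add: SSI_def shapley_weight_def)

lemma shapley_weight_nonneg: "shapley_weight n k \<ge> 0"
  by (simp add: shapley_weight_def)

lemma choose_mult_shapley_weight:
  assumes "k \<le> m"
  shows "real (m choose k) * shapley_weight (Suc m) k = 1 / real (Suc m)"
proof -
  have "real (m choose k) * (fact k * fact (m - k)) = fact m"
    using binomial_fact_lemma[OF assms] by (metis mult.commute of_nat_fact of_nat_mult)
  then have "real (m choose k) * shapley_weight (Suc m) k = fact m / fact (Suc m)"
    by (simp add: shapley_weight_def)
  also have "\<dots> = 1 / real (Suc m)"
    by (simp add: divide_simps)
  finally show ?thesis .
qed

lemma sum_shapley_weight_Pow:
  assumes "finite A"
  shows "(\<Sum>S \<in> Pow A. shapley_weight (Suc (card A)) (card S)) = 1"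
proof -
  let ?m = "card A"
  have "(\<Sum>S \<in> Pow A. shapley_weight (Suc ?m) (card S))
      = (\<Sum>k \<in> {0..?m}. \<Sum>S \<in> {S \<in> Pow A. card S = k}. shapley_weight (Suc ?m) (card S))"
    by (rule sum.group[symmetric]) (use assms in \<open>auto intro: card_mono\<close>)
  also have "\<dots> = (\<Sum>k \<in> {0..?m}. real (?m choose k) * shapley_weight (Suc ?m) k)"
    using n_subsets[OF assms] by (simp add: Pow_def)
  also have "\<dots> = (\<Sum>k \<in> {0..?m}. 1 / real (Suc ?m))"
    by (simp add: choose_mult_shapley_weight)
  also have "\<dots> = 1"
    by simp
  finally show ?thesis .
qed

lemma shapley_weight_0: "n \<ge> 1 \<Longrightarrow> shapley_weight n 0 = 1 / real n"
  by (cases n) (simp_all add: shapley_weight_def)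

lemma shapley_weight_pred: "n \<ge> 1 \<Longrightarrow> shapley_weight n (n - 1) = 1 / real n"
  by (cases n) (simp_all add: shapley_weight_def)

lemma weighted_sum_le_one_minus_weight:
  fixes w d :: "'a \<Rightarrow> real"
  assumes "finite X" "x \<in> X" "(\<Sum>y \<in> X. w y) = 1"
    and "\<And>y. y \<in> X \<Longrightarrow> w y \<ge> 0" "\<And>y. y \<in> X \<Longrightarrow> d y \<le> 1" "d x = 0"
  shows "(\<Sum>y \<in> X. w y * d y) \<le> 1 - w x"
proof -
  have "(\<Sum>y \<in> X. w y * d y) = (\<Sum>y \<in> X - {x}. w y * d y)"
    using assms(1,2,6) by (simp add: sum.remove)
  also have "\<dots> \<le> (\<Sum>y \<in> X - {x}. w y)"
    using assms(4,5) by (intro sum_mono) (simp add: mult_left_le)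
  also have "\<dots> = 1 - w x"
    using assms(1-3) by (simp add: sum_diff1)
  finally show ?thesis .
qed

lemma simple_game_le_1:
  assumes "simple_game n v" "S \<subseteq> {1..n}"
  shows "v S \<le> 1"
proof -
  have "v S \<in> {0, 1}"
    using assms unfolding simple_game_def by blast
  then show ?thesis by auto
qed

lemma simple_game_mono:
  "simple_game n v \<Longrightarrow> S \<subseteq> T \<Longrightarrow> T \<subseteq> {1..n} \<Longrightarrow> v S \<le> v T"
  by (simp add: simple_game_def)

lemma simple_game_marginal_le_1:
  assumes "simple_game n v" "i \<in> {1..n}" "S \<subseteq> {1..n}"
  shows "real (v (S \<union> {i})) - real (v S) \<le> 1"
  using simple_game_le_1[of n v "S \<union> {i}"] assms by simp

lemma dictator_if_singleton_wins_and_rest_loses: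
  assumes game: "simple_game n v" and i: "i \<in> {1..n}"
    and wins: "v {i} = 1" and loses: "v ({1..n} - {i}) = 0"
  shows "dictator n v i"
  unfolding dictator_def null_player_def
proof (intro conjI ballI allI impI)
  fix j S assume j: "j \<in> {1..n} - {i}" and S: "S \<subseteq> {1..n} - {j}"
  have win: "v T = 1" if "T \<subseteq> {1..n}" "i \<in> T" for T
    using simple_game_mono[OF game, of "{i}" T] simple_game_le_1[OF game, of T] that wins
    by simp
  have lose: "v T = 0" if "T \<subseteq> {1..n} - {i}" for T
    using simple_game_mono[OF game that] loses by simp
  show "v S = v (S \<union> {j})"
  proof (cases "i \<in> S")
    case True
    have "S \<subseteq> {1..n}" "S \<union> {j} \<subseteq> {1..n}"
      using S j by auto
    with True show ?thesis using win by simp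
  next
    case False
    have "S \<subseteq> {1..n} - {i}" "S \<union> {j} \<subseteq> {1..n} - {i}"
      using False S j by auto
    then show ?thesis using lose by simp
  qed
qed (fact wins)

lemma non_dictator_null_at_empty_or_rest:
  assumes game: "simple_game n v" and i: "i \<in> {1..n}" and "\<not> dictator n v i"
  shows "\<exists>S \<in> {{}, {1..n} - {i}}. v (S \<union> {i}) = v S"
proof (rule ccontr)
  let ?R = "{1..n} - {i}"
  assume "\<not> ?thesis"
  then have "v {i} \<noteq> v {}" "v (?R \<union> {i}) \<noteq> v ?R"
    by auto
  moreover have "v {} \<le> v {i}" "v ?R \<le> v (?R \<union> {i})"
    using simple_game_mono[OF game, of "{}" "{i}"] simple_game_mono[OF game, of ?R "?R \<union> {i}"] i
    by auto
  moreover have "v {i} \<le> 1" "v (?R \<union> {i}) \<le> 1"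
    using simple_game_le_1[OF game, of "{i}"] simple_game_le_1[OF game, of "?R \<union> {i}"] i
    by auto
  ultimately have "v {i} = 1" "v ?R = 0"
    by auto
  then show False
    using dictator_if_singleton_wins_and_rest_loses[OF game i] assms(3) by blast
qed

theorem theorem1:
  fixes n :: nat and v :: "nat set \<Rightarrow> nat" and i :: nat
  assumes "n \<ge> 2"
    and "simple_game n v"
    and "i \<in> {1..n}"
    and "\<not> dictator n v i"
  shows "SSI n v i \<le> (real n - 1) / real n"
proof -
  let ?R = "{1..n} - {i}"
  have card_R: "card ?R = n - 1"
    using assms(3) by simp
  obtain S0 where S0: "S0 \<in> {{}, ?R}" and null: "v (S0 \<union> {i}) = v S0"
    using non_dictator_null_at_empty_or_rest[OF assms(2-4)] ..
  have weight_S0: "shapley_weight n (card S0) = 1 / real n"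
    using S0 proof (elim insertE)
    assume "S0 = ?R"
    then show ?thesis
      using card_R shapley_weight_pred[of n] assms(1) by simp
  qed (use assms(1) in \<open>simp_all add: shapley_weight_0\<close>)
  have "SSI n v i \<le> 1 - shapley_weight n (card S0)"
    unfolding SSI_eq_shapley_weight_sum
  proof (rule weighted_sum_le_one_minus_weight)
    show "(\<Sum>S \<in> Pow ?R. shapley_weight n (card S)) = 1"
      using sum_shapley_weight_Pow[of ?R] card_R assms(1) by simp
    show "real (v (S \<union> {i})) - real (v S) \<le> 1" if "S \<in> Pow ?R" for S
      using simple_game_marginal_le_1[OF assms(2,3)] that by blast
    show "S0 \<in> Pow ?R"
      using S0 by blast
    show "real (v (S0 \<union> {i})) - real (v S0) = 0"
      using null by simp
  qed (simp_all add: shapley_weight_nonneg)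
  with weight_S0 show ?thesis
    using assms(1) by (simp add: diff_divide_distrib)
qed

end
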